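(* Let $\nu$ be a semi-neutral probability measure on $\mathrm{Mat}(m,\mathbb C)$ with compact support, and suppose that for $\mu$-almost every $\omega$ the family $\{M^n_\omega\}_n$ is bounded. Then every $A\in S_\nu=\{M^n_\omega:\omega\in\Omega,n\in\mathbb N\}$ satisfies $\|A\|\ge1$ (operator norm).
   Context: $\Omega=\mathrm{supp}(\nu)^{\mathbb N}$, $\mu=\nu^{\otimes\mathbb N}$; for $\omega=(M_1,M_2,\dots)$, $M^n_\omega=M_n\cdots M_1$. Semi-neutral: the Lyapunov indices $\kappa_1>\dots>\kappa_s$ with multiplicities $\alpha_i$ (Oseledets: a.s. $((M^n_\omega)^*M^n_\omega)^{1/(2n)}$ converges to a Hermitian matrix with eigenvalues $e^{\kappa_i}$, multiplicity $\alpha_i$) satisfy $\kappa_1=0$ and $\alpha_1\neq m$ (equivalently $\lim\frac1n\log\|M^n_\omega\|=0$ a.s. and $\mathbb E\log|\det M_1|<0$). *)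

theory Defs
  imports "HOL-Probability.Probability"
begin

type_synonym 'm cmat = "complex ^'m ^'m"

definition opnorm :: "'m::finite cmat \<Rightarrow> real" where
  "opnorm A = onorm (\<lambda>x::complex^'m. A *v x)"

text \<open>Left products: prod_mat w n = M_n ... M_1 where M_(k+1) = w k.\<close>
fun prod_mat :: "(nat \<Rightarrow> 'm::finite cmat) \<Rightarrow> nat \<Rightarrow> 'm cmat" where
  "prod_mat w 0 = mat 1"
| "prod_mat w (Suc n) = w n ** prod_mat w n"

definition mat_support :: "'m::finite cmat measure \<Rightarrow> 'm cmat set" where
  "mat_support \<nu> = {A. \<forall>U. open U \<and> A \<in> U \<longrightarrow> emeasure \<nu> U > 0}"

definition iid :: "'m::finite cmat measure \<Rightarrow> (nat \<Rightarrow> 'm cmat) measure" where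
  "iid \<nu> = PiM UNIV (\<lambda>_. \<nu>)"

text \<open>Positive and negative parts of log|det A| (with log 0 = -infinity).\<close>
definition logdet_pos :: "'m::finite cmat \<Rightarrow> ennreal" where
  "logdet_pos A = (if det A = 0 then 0 else ennreal (max 0 (ln (cmod (det A)))))"
definition logdet_neg :: "'m::finite cmat \<Rightarrow> ennreal" where
  "logdet_neg A = (if det A = 0 then \<infinity> else ennreal (max 0 (- ln (cmod (det A)))))"

text \<open>Semi-neutral: top Lyapunov index kappa_1 = 0 (a.s. (1/n) log ||M^n|| -> 0,
  with log 0 = -infinity) and alpha_1 \<noteq> m, i.e. E log|det M_1| < 0.\<close>
definition semi_neutral :: "'m::finite cmat measure \<Rightarrow> bool" where
  "semi_neutral \<nu> \<longleftrightarrow>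
     (AE w in iid \<nu>. (\<forall>n. opnorm (prod_mat w n) > 0) \<and>
        (\<lambda>n. ln (opnorm (prod_mat w n)) / real n) \<longlonglongrightarrow> 0)
   \<and> (\<integral>\<^sup>+ A. logdet_pos A \<partial>\<nu>) < (\<integral>\<^sup>+ A. logdet_neg A \<partial>\<nu>)"

definition S_set :: "'m::finite cmat measure \<Rightarrow> 'm cmat set" where
  "S_set \<nu> = {prod_mat w n | w n. (\<forall>k. w k \<in> mat_support \<nu>)}"

end

theory Submission
  imports Defs
begin

text \<open>
  Suppose \<open>A = M\<^sub>n \<cdots> M\<^sub>1\<close> with all \<open>M\<^sub>i\<close> in the support and \<open>\<parallel>A\<parallel> < 1\<close>.
  Since the products are a.s. bounded, \<open>sup\<^sub>n \<parallel>M\<^sup>n\<^sub>\<omega>\<parallel> \<le> K\<close> holds with positive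
  probability for some K. Repeating the word \<open>M\<^sub>1,\<dots>,M\<^sub>n\<close> and perturbing it slightly gives a
  cylinder event on the first L coordinates, of positive probability, on which the product of the
  first L factors has norm at most \<open>1/(2K)\<close>. By independence, the event H that this happens and
  all later partial products stay below K has probability \<open>s > 0\<close>; by stationarity and a reverse
  Fatou argument, with positive probability the shifted sequences visit H with frequency at least
  \<open>s/2\<close> infinitely often. Every visit at time j halves \<open>\<parallel>M\<^sup>N\<^sub>\<omega>\<parallel>\<close> for all
  \<open>N \<ge> j + L\<close>, so the norms decay exponentially along a subsequence, contradicting
  \<open>(1/n) log \<parallel>M\<^sup>n\<^sub>\<omega>\<parallel> \<rightarrow> 0\<close>.
\<close>

section \<open>Operator norm and products of matrices\<close>

lemma opnorm_nonneg: "0 \<le> opnorm A"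
  unfolding opnorm_def by (rule onorm_pos_le) simp

lemma opnorm_matrix_mul_le: "opnorm (A ** B) \<le> opnorm A * opnorm (B::'m::finite cmat)"
proof -
  have "(*v) (A ** B) = (*v) A \<circ> (*v) B"
    by (auto simp: matrix_vector_mul_assoc)
  then show ?thesis
    unfolding opnorm_def by (simp add: onorm_compose)
qed

lemma opnorm_add_le: "opnorm (A + B) \<le> opnorm A + opnorm (B::'m::finite cmat)"
proof -
  have "(*v) (A + B) = (\<lambda>x. A *v x + B *v x)"
    by (auto simp: matrix_vector_mult_add_rdistrib)
  then show ?thesis
    unfolding opnorm_def by (simp add: onorm_triangle)
qed

lemma opnorm_mat_1 [simp]: "opnorm (mat 1 :: 'm::finite cmat) = 1"
proof -
  have "(*v) (mat 1 :: 'm cmat) = (\<lambda>x. x)" by auto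
  then show ?thesis unfolding opnorm_def by (simp add: onorm_id)
qed

lemma opnorm_le_card_norm: "opnorm (A::'m::finite cmat) \<le> real CARD('m) * real CARD('m) * norm A"
  unfolding opnorm_def
proof (rule onorm_le)
  fix x :: "complex^'m"
  have "norm (A *v x) \<le> (\<Sum>i\<in>UNIV. norm ((A *v x) $ i))"
    by (simp add: norm_vec_def L2_set_le_sum)
  also have "\<dots> \<le> (\<Sum>i::'m\<in>UNIV. \<Sum>j::'m\<in>UNIV. norm A * norm x)"
  proof (rule sum_mono)
    fix i
    have "norm ((A *v x) $ i) \<le> (\<Sum>j\<in>UNIV. norm (A $ i $ j) * norm (x $ j))"
      unfolding matrix_vector_mult_def by (simp add: norm_sum norm_mult order_trans[OF norm_sum])
    also have "\<dots> \<le> (\<Sum>j::'m\<in>UNIV. norm A * norm x)"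
      by (intro sum_mono mult_mono)
        (auto intro: order_trans[OF Finite_Cartesian_Product.norm_nth_le Finite_Cartesian_Product.norm_nth_le]
          Finite_Cartesian_Product.norm_nth_le)
    finally show "norm ((A *v x) $ i) \<le> (\<Sum>j::'m\<in>UNIV. norm A * norm x)" .
  qed
  finally show "norm (A *v x) \<le> real CARD('m) * real CARD('m) * norm A * norm x"
    by (simp add: mult.assoc)
qed

lemma continuous_on_opnorm: "continuous_on UNIV (opnorm :: 'm::finite cmat \<Rightarrow> real)"
proof (rule continuous_onI)
  fix A :: "'m cmat" and e :: real
  assume "0 < e"
  define c where "c = real CARD('m) * real CARD('m)"
  have "c > 0" by (simp add: c_def)
  have "\<bar>opnorm B - opnorm A\<bar> \<le> c * dist B A" for B
    using opnorm_add_le[of A "B - A"] opnorm_add_le[of B "A - B"]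
      opnorm_le_card_norm[of "B - A"] opnorm_le_card_norm[of "A - B"]
    by (simp add: c_def dist_norm norm_minus_commute abs_le_iff)
  then have "dist (opnorm B) (opnorm A) \<le> e" if "dist B A < e / c" for B
  proof -
    have "c * dist B A \<le> e" using that \<open>c > 0\<close> by (simp add: field_simps)
    then show ?thesis using \<open>\<bar>opnorm B - opnorm A\<bar> \<le> c * dist B A\<close> by (simp add: dist_real_def)
  qed
  with \<open>c > 0\<close> \<open>0 < e\<close> show "\<exists>d>0. \<forall>B\<in>UNIV. dist B A < d \<longrightarrow> dist (opnorm B) (opnorm A) \<le> e"
    by (intro exI[of _ "e / c"]) auto
qed

lemma bounded_imp_opnorm_bounded:
  assumes "bounded (S :: 'm::finite cmat set)"
  obtains C where "\<And>A. A \<in> S \<Longrightarrow> opnorm A \<le> C"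
proof -
  obtain a where "\<And>A. A \<in> S \<Longrightarrow> norm A \<le> a"
    using assms unfolding bounded_iff by blast
  then have "opnorm A \<le> real CARD('m) * real CARD('m) * a" if "A \<in> S" for A
    using opnorm_le_card_norm[of A] that by (meson mult_left_mono of_nat_0_le_iff order_trans zero_le_mult_iff)
  then show ?thesis using that by blast
qed

lemma tendsto_matrix_matrix_mult [tendsto_intros]:
  fixes f g :: "'a \<Rightarrow> 'm::finite cmat"
  assumes "(f \<longlongrightarrow> A) F" "(g \<longlongrightarrow> B) F"
  shows "((\<lambda>x. f x ** g x) \<longlongrightarrow> A ** B) F"
  unfolding matrix_matrix_mult_def by (intro tendsto_intros assms)

definition seq_shift :: "nat \<Rightarrow> (nat \<Rightarrow> 'a) \<Rightarrow> nat \<Rightarrow> 'a" where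
  "seq_shift k w = (\<lambda>i. w (i + k))"

lemma seq_shift_apply [simp]: "seq_shift k w i = w (i + k)"
  by (simp add: seq_shift_def)

lemma seq_shift_seq_shift [simp]: "seq_shift L (seq_shift j w) = seq_shift (j + L) w"
  by (simp add: seq_shift_def add_ac)

lemma prod_mat_add: "prod_mat w (k + n) = prod_mat (seq_shift k w) n ** prod_mat w k"
  by (induction n) (auto simp: matrix_mul_assoc add.commute)

lemma prod_mat_cong: "(\<And>i. i < n \<Longrightarrow> w i = v i) \<Longrightarrow> prod_mat w n = prod_mat v n"
  by (induction n) auto

lemma opnorm_prod_mat_periodic:
  "opnorm (prod_mat (\<lambda>i. w (i mod n)) (t * n)) \<le> opnorm (prod_mat w n) ^ t"
proof (induction t)
  case (Suc t)
  have "prod_mat (seq_shift (t * n) (\<lambda>i. w (i mod n))) n = prod_mat w n"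
    by (rule prod_mat_cong) simp
  then have "prod_mat (\<lambda>i. w (i mod n)) (Suc t * n) = prod_mat w n ** prod_mat (\<lambda>i. w (i mod n)) (t * n)"
    using prod_mat_add[of "\<lambda>i. w (i mod n)" "t * n" n] by (simp add: add.commute)
  with Suc opnorm_nonneg show ?case
    by (auto intro: order_trans[OF opnorm_matrix_mul_le] mult_left_mono)
qed simp

lemma tendsto_prod_mat:
  assumes "\<And>i. i < n \<Longrightarrow> ((\<lambda>x. w x i) \<longlongrightarrow> v i) F"
  shows "((\<lambda>x. prod_mat (w x) n) \<longlongrightarrow> prod_mat v n) F"
  using assms by (induction n) (auto intro!: tendsto_intros)

lemma opnorm_prod_mat_locally_less:
  fixes v :: "nat \<Rightarrow> 'm::finite cmat"
  assumes "opnorm (prod_mat v n) < r"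
  obtains d where "0 < d" "\<And>w. (\<And>i. i < n \<Longrightarrow> dist (w i) (v i) < d) \<Longrightarrow> opnorm (prod_mat w n) < r"
proof -
  have "\<exists>d>0. \<forall>w. (\<forall>i<n. dist (w i) (v i) < d) \<longrightarrow> opnorm (prod_mat w n) < r"
  proof (rule ccontr)
    assume "\<not> ?thesis"
    then have "\<exists>w. (\<forall>i<n. dist (w i) (v i) < d) \<and> r \<le> opnorm (prod_mat w n)" if "0 < d" for d
      using that by (auto simp: not_less dest: spec[of _ d])
    then have "\<forall>k. \<exists>w. (\<forall>i<n. dist (w i) (v i) < 1 / Suc k) \<and> r \<le> opnorm (prod_mat w n)"
      by (simp del: of_nat_Suc)
    then have "\<exists>w. \<forall>k. (\<forall>i<n. dist (w k i) (v i) < 1 / Suc k) \<and> r \<le> opnorm (prod_mat (w k) n)"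
      by (rule choice)
    then obtain w where w: "\<forall>k. (\<forall>i<n. dist (w k i) (v i) < 1 / Suc k) \<and> r \<le> opnorm (prod_mat (w k) n)" ..
    have "(\<lambda>k. w k i) \<longlonglongrightarrow> v i" if "i < n" for i
    proof (rule tendsto_dist_iff[THEN iffD2], rule LIMSEQ_norm_0)
      show "norm (dist (w k i) (v i)) < 1 / Suc k" for k using w that by simp
    qed
    then have "(\<lambda>k. opnorm (prod_mat (w k) n)) \<longlonglongrightarrow> opnorm (prod_mat v n)"
      by (intro continuous_on_tendsto_compose[OF continuous_on_opnorm] tendsto_prod_mat) auto
    moreover have "r \<le> opnorm (prod_mat (w k) n)" for k using w by blast
    ultimately have "r \<le> opnorm (prod_mat v n)"
      by (intro LIMSEQ_le_const) auto
    with assms show False by simp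
  qed
  then show ?thesis using that by blast
qed

lemma opnorm_prod_mat_halves:
  assumes "\<And>t. opnorm (prod_mat (seq_shift L (seq_shift j w)) t ** prod_mat (seq_shift j w) L) \<le> 1 / 2"
    and "j + L \<le> N"
  shows "opnorm (prod_mat w N) \<le> opnorm (prod_mat w j) / 2"
proof -
  obtain t where N: "N = j + (L + t)"
    using \<open>j + L \<le> N\<close> by (metis add.assoc le_iff_add)
  have "prod_mat w N = (prod_mat (seq_shift L (seq_shift j w)) t ** prod_mat (seq_shift j w) L) ** prod_mat w j"
    unfolding N prod_mat_add[of w j] prod_mat_add[of "seq_shift j w" L] by simp
  also have "opnorm \<dots> \<le> 1 / 2 * opnorm (prod_mat w j)"
    using assms(1) by (rule order_trans[OF opnorm_matrix_mul_le mult_right_mono[OF _ opnorm_nonneg]])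
  finally show ?thesis by simp
qed

section \<open>Sequences halved after a positive density of times\<close>

lemma card_window_le: "card {j::nat. N < j + L \<and> j \<le> N} \<le> L"
proof -
  have "card {j::nat. N < j + L \<and> j \<le> N} \<le> card {Suc N - L..<Suc N}"
    by (intro card_mono) auto
  then show ?thesis by simp
qed

lemma card_selected_le:
  "card {j::nat. j \<le> N \<and> sel j} \<le> card {j. j + L \<le> N \<and> sel j} + L"
proof -
  have "card {j. j \<le> N \<and> sel j} \<le> card ({j. j + L \<le> N \<and> sel j} \<union> {j. N < j + L \<and> j \<le> N})"
    by (intro card_mono) (auto intro: finite_subset[of _ "{..N}"])
  also have "\<dots> \<le> card {j. j + L \<le> N \<and> sel j} + card {j. N < j + L \<and> j \<le> N}"
    by (rule card_Un_le)
  finally show ?thesis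
    using card_window_le[of N L] by linarith
qed

text \<open>Selected times closer than L to each other may share one halving, hence the division by L.\<close>
lemma halving_bound:
  fixes f :: "nat \<Rightarrow> real" and L :: nat
  assumes L: "1 \<le> L" and bound: "\<And>N. f N \<le> C" and "0 \<le> C"
    and halving: "\<And>j N. sel j \<Longrightarrow> j + L \<le> N \<Longrightarrow> f N \<le> f j / 2"
  shows "f N \<le> C * (1/2) ^ (card {j. j + L \<le> N \<and> sel j} div L)"
proof (induction N rule: less_induct)
  case (less N)
  define S where "S = {j. j + L \<le> N \<and> sel j}"
  have "finite S" unfolding S_def by (rule finite_subset[of _ "{..N}"]) auto
  show ?case
  proof (cases "S = {}")
    case True
    then show ?thesis using bound[of N] by (simp add: S_def[symmetric])
  next
    case False
    define j where "j = Max S"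
    have j: "j \<in> S" "\<And>i. i \<in> S \<Longrightarrow> i \<le> j"
      using False \<open>finite S\<close> unfolding j_def by auto
    have "j < N" using j(1) L unfolding S_def by auto
    have "S \<subseteq> {i. i \<le> j \<and> sel i}"
      using j(2) by (auto simp: S_def)
    then have "card S \<le> card {i. i \<le> j \<and> sel i}"
      by (intro card_mono) auto
    also have "\<dots> \<le> card {i. i + L \<le> j \<and> sel i} + L"
      by (rule card_selected_le)
    finally have "card S div L \<le> (card {i. i + L \<le> j \<and> sel i} + L) div L"
      by (rule div_le_mono)
    then have count: "card S div L \<le> card {i. i + L \<le> j \<and> sel i} div L + 1"
      using L by simp
    have "f N \<le> f j / 2"
      using halving[of j N] j(1) unfolding S_def by auto
    also have "\<dots> \<le> C * (1/2) ^ (card {i. i + L \<le> j \<and> sel i} div L + 1)"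
      using less[OF \<open>j < N\<close>] by simp
    also have "\<dots> \<le> C * (1/2) ^ (card S div L)"
      using \<open>0 \<le> C\<close> count by (intro mult_left_mono power_decreasing) auto
    finally show ?thesis unfolding S_def .
  qed
qed

lemma ln_le_of_halving:
  fixes f :: "nat \<Rightarrow> real" and L :: nat
  assumes L: "1 \<le> L" and pos: "\<And>N. 0 < f N" and bound: "\<And>N. f N \<le> C"
    and halving: "\<And>j N. sel j \<Longrightarrow> j + L \<le> N \<Longrightarrow> f N \<le> f j / 2"
  shows "ln (f N) \<le> ln (4 * C) - ln 2 * card {j. j < N \<and> sel j} / L"
proof -
  define c where "c = card {j. j + L \<le> N \<and> sel j}"
  define c' where "c' = card {j. j < N \<and> sel j}"
  have "0 < C" using pos[of 0] bound[of 0] by linarith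
  have "c' \<le> card {j. j \<le> N \<and> sel j}"
    unfolding c'_def by (intro card_mono) (auto intro: finite_subset[of _ "{..N}"])
  then have "c' \<le> c + L"
    using card_selected_le[of N sel L] unfolding c_def by linarith
  moreover have "c = L * (c div L) + c mod L" "c mod L < L"
    using L by simp_all
  ultimately have "real c' < L * (c div L) + 2 * L"
    by linarith
  then have c'_le: "real c' / L - 2 \<le> c div L"
    using L by (simp add: field_simps)
  have "ln (f N) \<le> ln (C * (1/2) ^ (c div L))"
    using halving_bound[OF L bound _ halving] pos[of N] \<open>0 < C\<close> unfolding c_def by simp
  also have "\<dots> = ln C - (c div L) * ln 2"
    using \<open>0 < C\<close> by (simp add: ln_mult ln_realpow ln_div)
  also have "\<dots> \<le> ln C - (real c' / L - 2) * ln 2"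
    using c'_le by (intro diff_left_mono mult_right_mono) auto
  also have "\<dots> = ln (4 * C) - ln 2 * c' / L"
    using \<open>0 < C\<close> ln_realpow[of 2 2] by (simp add: ln_mult field_simps)
  finally show ?thesis unfolding c'_def .
qed

lemma frequent_halving_not_subexponential:
  fixes f :: "nat \<Rightarrow> real" and L :: nat and s :: real
  assumes pos: "\<And>N. 0 < f N" and bound: "\<And>N. f N \<le> C"
    and halving: "\<And>j N. sel j \<Longrightarrow> j + L \<le> N \<Longrightarrow> f N \<le> f j / 2"
    and "0 < s" and frequent: "\<exists>\<^sub>F N in sequentially. s * N / 2 \<le> card {j. j < N \<and> sel j}"
  shows "\<not> (\<lambda>N. ln (f N) / N) \<longlonglongrightarrow> 0"
proof
  assume lim: "(\<lambda>N. ln (f N) / N) \<longlonglongrightarrow> 0"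
  have L: "1 \<le> L"
  proof (rule ccontr)
    assume "\<not> 1 \<le> L"
    obtain N :: nat where "s * N / 2 \<le> card {j. j < N \<and> sel j}" "0 < N"
      using frequently_eventually_frequently[OF frequent eventually_gt_at_top[of 0]]
      by (auto simp: frequently_sequentially)
    moreover have "0 < s * N / 2"
      using \<open>0 < s\<close> \<open>0 < N\<close> by simp
    ultimately have "0 < card {j. j < N \<and> sel j}"
      by linarith
    then obtain j where "sel j"
      by (auto simp: card_gt_0_iff)
    then have "f j \<le> f j / 2"
      using halving[of j j] \<open>\<not> 1 \<le> L\<close> by simp
    with pos[of j] show False by simp
  qed
  define \<eta> where "\<eta> = s * ln 2 / (2 * L)"
  have "0 < \<eta>" using \<open>0 < s\<close> L by (simp add: \<eta>_def)
  have "(\<lambda>N. ln (f N) / N - (ln (4 * C) / N - \<eta>)) \<longlonglongrightarrow> 0 - (0 - \<eta>)"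
    by (intro tendsto_intros lim tendsto_divide_0[OF tendsto_const] filterlim_real_sequentially)
  then have "\<forall>\<^sub>F N in sequentially. ln (4 * C) / N - \<eta> < ln (f N) / N \<and> 0 < N"
    using \<open>0 < \<eta>\<close> by (intro eventually_conj order_tendstoD(1)[THEN eventually_mono] eventually_gt_at_top) auto
  with frequent have "\<exists>\<^sub>F N in sequentially. False"
  proof (rule frequently_eventually_frequently[THEN frequently_elim1], elim conjE)
    fix N :: nat
    assume "s * N / 2 \<le> card {j. j < N \<and> sel j}" "ln (4 * C) / N - \<eta> < ln (f N) / N" "0 < N"
    moreover have "ln (f N) \<le> ln (4 * C) - ln 2 * card {j. j < N \<and> sel j} / L"
      by (rule ln_le_of_halving[OF L pos bound halving])
    moreover have "\<eta> * N \<le> ln 2 * card {j. j < N \<and> sel j} / L"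
      using L \<open>s * N / 2 \<le> _\<close> unfolding \<eta>_def by (simp add: field_simps)
    ultimately have "ln (f N) / N \<le> (ln (4 * C) - \<eta> * N) / N"
      by (intro divide_right_mono) auto
    also have "\<dots> = ln (4 * C) / N - \<eta>"
      using \<open>0 < N\<close> by (simp add: field_simps)
    finally show False
      using \<open>ln (4 * C) / N - \<eta> < ln (f N) / N\<close> by simp
  qed
  then show False by simp
qed

section \<open>Positive probability and frequent visits\<close>

lemma ex_in_positive_measure_AE:
  assumes "AE x in M. P x" and "0 < measure M A"
  obtains x where "x \<in> A" "P x"
proof -
  have A: "A \<in> sets M"
    using assms(2) measure_notin_sets by fastforce
  obtain N where N: "{x \<in> space M. \<not> P x} \<subseteq> N" "emeasure M N = 0" "N \<in> sets M"
    using assms(1) by (rule AE_E)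
  have "\<not> A \<subseteq> N"
  proof
    assume "A \<subseteq> N"
    then have "emeasure M A = 0"
      using emeasure_mono[OF _ N(3)] N(2) by (metis le_zero_eq)
    with assms(2) show False by (simp add: measure_def)
  qed
  then show ?thesis
    using that N(1) sets.sets_into_space[OF A] by blast
qed

lemma (in prob_space) AE_ex_imp_prob_positive:
  assumes "AE x in M. \<exists>n::nat. x \<in> A n" and "\<And>n. A n \<in> events"
  obtains n where "0 < prob (A n)"
proof (rule ccontr)
  assume "\<not> thesis"
  then have "prob (A n) = 0" for n
    using that[of n] measure_nonneg[of M "A n"] by linarith
  then have "A n \<in> null_sets M" for n
    using assms(2) by (simp add: null_sets_def emeasure_eq_measure)
  then have "AE x in M. x \<notin> (\<Union>n. A n)"
    by (intro AE_not_in null_sets_UN)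
  with assms(1) have "AE x in M. False"
    by eventually_elim auto
  then show False by (simp add: AE_False)
qed

lemma card_visits_eq_sum_indicator:
  fixes E :: "nat \<Rightarrow> 'a set"
  shows "real (card {j. j < N \<and> x \<in> E j}) = (\<Sum>j<N. indicator (E j) x)"
proof -
  have "{j. j < N \<and> x \<in> E j} = {..<N} \<inter> {j. x \<in> E j}"
    by auto
  then have "real (card {j. j < N \<and> x \<in> E j}) = (\<Sum>j\<in>{..<N} \<inter> {j. x \<in> E j}. 1)"
    by (simp only: real_of_card)
  also have "\<dots> = (\<Sum>j<N. if j \<in> {j. x \<in> E j} then 1 else 0)"
    by (simp only: sum.inter_restrict[OF finite_lessThan])
  also have "\<dots> = (\<Sum>j<N. indicator (E j) x)"
    by (intro sum.cong) (auto simp: indicator_def)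
  finally show ?thesis .
qed

lemma (in prob_space) prob_dense_visits_ge:
  fixes E :: "nat \<Rightarrow> 'a set" and s :: real and N :: nat
  assumes E: "\<And>j. E j \<in> events" and s: "\<And>j. prob (E j) = s"
  shows "s / 2 \<le> prob {x \<in> space M. s * N / 2 \<le> card {j. j < N \<and> x \<in> E j}}"
proof -
  define cnt where "cnt x = (\<Sum>j<N. indicator (E j) x :: real)" for x
  define D where "D = {x \<in> space M. s * N / 2 \<le> cnt x}"
  have D_eq: "{x \<in> space M. s * N / 2 \<le> card {j. j < N \<and> x \<in> E j}} = D"
    by (simp add: D_def cnt_def card_visits_eq_sum_indicator)
  have D: "D \<in> events"
    unfolding D_def cnt_def using E by measurable
  have s_bounds: "0 \<le> s" "s \<le> 1"
    using s[of 0] by auto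
  show ?thesis
  proof (cases "N = 0")
    case True
    then have "D = space M" by (simp add: D_def cnt_def)
    with s_bounds D_eq show ?thesis by (simp add: prob_space)
  next
    case False
    have cnt_le: "cnt x \<le> real N * indicator D x + s * N / 2" if "x \<in> space M" for x
    proof (cases "x \<in> D")
      case True
      have "cnt x \<le> (\<Sum>j<N. 1)" unfolding cnt_def by (intro sum_mono) (simp add: indicator_def)
      moreover have "0 \<le> s * N" using s_bounds by simp
      ultimately show ?thesis using True by simp
    next
      case False
      with that show ?thesis by (simp add: D_def)
    qed
    have "N * s = expectation cnt"
      unfolding cnt_def using E s by (simp add: emeasure_eq_measure)
    also have "\<dots> \<le> expectation (\<lambda>x. real N * indicator D x + s * N / 2)"
      using E D cnt_le unfolding cnt_def
      by (intro integral_mono) (auto simp: emeasure_eq_measure)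
    also have "\<dots> = N * prob D + s * N / 2"
      using D by (simp add: emeasure_eq_measure prob_space)
    finally show ?thesis
      using False D_eq by (simp add: field_simps)
  qed
qed

text \<open>A reverse Fatou argument: each event "density of visits up to N is at least s/2" has
  probability at least s/2, hence so does their limes superior.\<close>
lemma (in prob_space) prob_frequently_dense_visits:
  fixes E :: "nat \<Rightarrow> 'a set" and s :: real
  assumes E: "\<And>j. E j \<in> events" and s: "\<And>j. prob (E j) = s"
  shows "s / 2 \<le> prob {x \<in> space M. \<exists>\<^sub>F N in sequentially. s * N / 2 \<le> card {j. j < N \<and> x \<in> E j}}"
proof -
  define D where "D N = {x \<in> space M. s * N / 2 \<le> card {j. j < N \<and> x \<in> E j}}" for N :: nat
  define T where "T m = (\<Union>N\<in>{m..}. D N)" for m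
  have D: "D N \<in> events" for N
    unfolding D_def card_visits_eq_sum_indicator using E by measurable
  have T: "T m \<in> events" for m
    unfolding T_def using D by blast
  have "decseq T"
    unfolding T_def decseq_def by force
  then have "(\<lambda>m. prob (T m)) \<longlonglongrightarrow> prob (\<Inter>m. T m)"
    using T by (intro finite_Lim_measure_decseq) auto
  moreover have "s / 2 \<le> prob (T m)" for m
  proof -
    have "s / 2 \<le> prob (D m)"
      unfolding D_def by (rule prob_dense_visits_ge[OF E s])
    also have "\<dots> \<le> prob (T m)"
      using T unfolding T_def by (intro finite_measure_mono) auto
    finally show ?thesis .
  qed
  ultimately have "s / 2 \<le> prob (\<Inter>m. T m)"
    by (intro LIMSEQ_le_const) auto
  also have "(\<Inter>m. T m) = {x \<in> space M. \<exists>\<^sub>F N in sequentially. s * N / 2 \<le> card {j. j < N \<and> x \<in> E j}}"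
    unfolding T_def D_def frequently_sequentially by auto
  finally show ?thesis .
qed

section \<open>The i.i.d. sequence space\<close>

lemma sequence_space_iid: "prob_space \<nu> \<Longrightarrow> sequence_space \<nu>"
  unfolding sequence_space_def product_prob_space_def product_sigma_finite_def product_prob_space_axioms_def
  by (auto intro: prob_space_imp_sigma_finite)

lemma space_iid: "sets \<nu> = sets borel \<Longrightarrow> space (iid \<nu>) = UNIV"
  unfolding iid_def by (auto simp: space_PiM sets_eq_imp_space_eq[of \<nu> borel])

lemma measurable_seq_shift_iid [measurable]: "seq_shift k \<in> measurable (iid \<nu>) (iid \<nu>)"
  unfolding iid_def seq_shift_def
  by (rule measurable_PiM_single') (auto simp: space_PiM PiE_iff)

lemma borel_measurable_opnorm [measurable]: "opnorm \<in> borel_measurable borel"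
  by (rule borel_measurable_continuous_onI[OF continuous_on_opnorm])

lemma measurable_prod_mat_iid:
  assumes "sets \<nu> = sets borel"
  shows "(\<lambda>\<omega>. prod_mat \<omega> n) \<in> borel_measurable (iid \<nu>)"
proof (induction n)
  case (Suc n)
  have "(\<lambda>\<omega>. \<omega> n) \<in> measurable (iid \<nu>) \<nu>"
    unfolding iid_def by (rule measurable_component_singleton) simp
  then have "(\<lambda>\<omega>. \<omega> n) \<in> borel_measurable (iid \<nu>)"
    by (simp add: measurable_cong_sets[OF refl assms])
  moreover have "continuous_on UNIV (\<lambda>x. fst x ** snd x :: 'a::finite cmat)"
    unfolding matrix_matrix_mult_def by (intro continuous_intros)
  ultimately show ?case
    using borel_measurable_continuous_Pair[of "\<lambda>\<omega>. \<omega> n" _ "\<lambda>\<omega>. prod_mat \<omega> n"] Suc by simp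
qed simp

text \<open>Splitting a sequence at time k (comb_seq) identifies iid \<nu> with iid \<nu> \<Otimes> iid \<nu>.\<close>
lemma iid_measure_prefix_shift:
  assumes "prob_space \<nu>"
    and X: "X \<in> sets (iid \<nu>)" and X_prefix: "\<And>a b. (\<And>i. i < k \<Longrightarrow> a i = b i) \<Longrightarrow> a \<in> X \<longleftrightarrow> b \<in> X"
    and Y: "Y \<in> sets (iid \<nu>)"
  shows "measure (iid \<nu>) {\<omega> \<in> X. seq_shift k \<omega> \<in> Y} = measure (iid \<nu>) X * measure (iid \<nu>) Y"
proof -
  interpret sequence_space \<nu> using sequence_space_iid[OF assms(1)] .
  have S: "iid \<nu> = S" unfolding iid_def ..
  let ?comb = "\<lambda>(\<omega>, \<omega>'). comb_seq k \<omega> \<omega>'"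
  have "{\<omega> \<in> X. seq_shift k \<omega> \<in> Y} \<in> sets (iid \<nu>)"
    using X Y by measurable
  then have Z: "{\<omega> \<in> X. seq_shift k \<omega> \<in> Y} \<in> sets S" unfolding S .
  have "measure S {\<omega> \<in> X. seq_shift k \<omega> \<in> Y} = measure (distr (S \<Otimes>\<^sub>M S) S ?comb) {\<omega> \<in> X. seq_shift k \<omega> \<in> Y}"
    using PiM_comb_seq[of k] by simp
  also have "\<dots> = measure (S \<Otimes>\<^sub>M S) (?comb -` {\<omega> \<in> X. seq_shift k \<omega> \<in> Y} \<inter> space (S \<Otimes>\<^sub>M S))"
    by (rule measure_distr[OF measurable_comb_seq Z])
  also have "?comb -` {\<omega> \<in> X. seq_shift k \<omega> \<in> Y} \<inter> space (S \<Otimes>\<^sub>M S) = X \<times> Y"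
  proof -
    have shift_comb: "seq_shift k (comb_seq k a b) = b" for a b
      by (rule ext) (simp add: comb_seq_add)
    have prefix_comb: "comb_seq k a b \<in> X \<longleftrightarrow> a \<in> X" for a b
      by (rule X_prefix) (simp add: comb_seq_less)
    have space_comb: "comb_seq k a b \<in> space S" if "a \<in> space S" "b \<in> space S" for a b
      using measurable_space[OF measurable_comb_seq[where i=k and M=\<nu>], of "(a, b)"] that
      by (simp add: space_pair_measure)
    show ?thesis
      using sets.sets_into_space[OF X] sets.sets_into_space[OF Y] unfolding S
      by (auto simp: space_pair_measure shift_comb prefix_comb space_comb)
  qed
  also have "measure (S \<Otimes>\<^sub>M S) (X \<times> Y) = measure S X * measure S Y"
    using X Y unfolding S measure_def
    by (simp add: P.emeasure_pair_measure_Times enn2real_mult)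
  finally show ?thesis unfolding S .
qed

lemma iid_cylinder_eq_prod_emb:
  assumes "sets \<nu> = sets borel"
  shows "{\<omega>. \<forall>i<L. \<omega> i \<in> U i} = prod_emb UNIV (\<lambda>_. \<nu>) {..<L} (\<Pi>\<^sub>E i\<in>{..<L}. U i)"
  using sets_eq_imp_space_eq[OF assms] by (auto simp: prod_emb_def PiE_iff)

lemma sets_iid_cylinder:
  assumes "sets \<nu> = sets borel" "\<And>i. i < L \<Longrightarrow> U i \<in> sets borel"
  shows "{\<omega>. \<forall>i<L. \<omega> i \<in> U i} \<in> sets (iid \<nu>)"
  unfolding iid_cylinder_eq_prod_emb[OF assms(1)] iid_def
  using assms by (intro sets_PiM_I) auto

lemma iid_cylinder_positive:
  assumes "prob_space \<nu>" "sets \<nu> = sets borel"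
    and "\<And>i. i < L \<Longrightarrow> open (U i)" "\<And>i. i < L \<Longrightarrow> v i \<in> U i" "\<And>i. v i \<in> mat_support \<nu>"
  shows "0 < measure (iid \<nu>) {\<omega>. \<forall>i<L. \<omega> i \<in> U i}"
proof -
  interpret sequence_space \<nu> using sequence_space_iid[OF assms(1)] .
  have "0 < measure \<nu> (U i)" if "i \<in> {..<L}" for i
    using assms(3-5)[of i] that unfolding mat_support_def by (auto simp: M.emeasure_eq_measure)
  then have "0 < (\<Prod>i<L. measure \<nu> (U i))"
    by (rule prod_pos)
  moreover have "emeasure (iid \<nu>) {\<omega>. \<forall>i<L. \<omega> i \<in> U i} = (\<Prod>i<L. emeasure \<nu> (U i))"
    unfolding iid_cylinder_eq_prod_emb[OF assms(2)] iid_def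
    by (rule emeasure_PiM_emb) (auto simp: assms(2) assms(3))
  then have "measure (iid \<nu>) {\<omega>. \<forall>i<L. \<omega> i \<in> U i} = (\<Prod>i<L. measure \<nu> (U i))"
    unfolding measure_def[of "iid \<nu>"] by (simp add: M.emeasure_eq_measure prod_ennreal prod_nonneg)
  ultimately show ?thesis
    by simp
qed

lemma prob_space_iid: "prob_space \<nu> \<Longrightarrow> prob_space (iid \<nu>)"
  unfolding iid_def by (rule prob_space_PiM)

lemma measure_iid_seq_shift_vimage:
  assumes "prob_space \<nu>" "sets \<nu> = sets borel" "Y \<in> sets (iid \<nu>)"
  shows "measure (iid \<nu>) {\<omega>. seq_shift k \<omega> \<in> Y} = measure (iid \<nu>) Y"
  using iid_measure_prefix_shift[OF assms(1) sets.top _ assms(3), of k]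
    prob_space.prob_space[OF prob_space_iid[OF assms(1)]]
  by (simp add: space_iid[OF assms(2)])

lemma iid_frequent_visits_positive:
  assumes "prob_space \<nu>" "sets \<nu> = sets borel" "H \<in> sets (iid \<nu>)" "0 < measure (iid \<nu>) H"
  shows "0 < measure (iid \<nu>)
    {\<omega>. \<exists>\<^sub>F N in sequentially. measure (iid \<nu>) H * N / 2 \<le> card {j. j < N \<and> seq_shift j \<omega> \<in> H}}"
proof -
  interpret prob_space "iid \<nu>" using prob_space_iid[OF assms(1)] .
  let ?E = "\<lambda>j. {\<omega>. seq_shift j \<omega> \<in> H}"
  have "?E j \<in> events" for j
    using measurable_sets[OF measurable_seq_shift_iid assms(3)] by (simp add: space_iid[OF assms(2)] vimage_def)
  moreover have "prob (?E j) = prob H" for j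
    by (rule measure_iid_seq_shift_vimage[OF assms(1-3)])
  ultimately have "prob H / 2 \<le> prob {\<omega> \<in> space (iid \<nu>).
    \<exists>\<^sub>F N in sequentially. prob H * N / 2 \<le> card {j. j < N \<and> \<omega> \<in> ?E j}}"
    by (rule prob_frequently_dense_visits)
  then show ?thesis
    using assms(4) by (simp add: space_iid[OF assms(2)])
qed

lemma iid_contracting_cylinder:
  fixes w :: "nat \<Rightarrow> 'm::finite cmat"
  assumes "prob_space \<nu>" "sets \<nu> = sets borel" "\<And>k. w k \<in> mat_support \<nu>"
    and "opnorm (prod_mat w n) < 1" "0 < r"
  obtains C L where "C \<in> sets (iid \<nu>)" "0 < measure (iid \<nu>) C"
    "\<And>a b. (\<And>i. i < L \<Longrightarrow> a i = b i) \<Longrightarrow> a \<in> C \<longleftrightarrow> b \<in> C"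
    "\<And>\<omega>. \<omega> \<in> C \<Longrightarrow> opnorm (prod_mat \<omega> L) < r"
proof -
  obtain t where t: "opnorm (prod_mat w n) ^ t < r"
    using real_arch_pow_inv[OF assms(5,4)] by blast
  define v where "v i = w (i mod n)" for i
  have "opnorm (prod_mat v (t * n)) < r"
    using opnorm_prod_mat_periodic[of w n t] t unfolding v_def by linarith
  then obtain d where "0 < d"
    and close: "\<And>\<omega>. (\<And>i. i < t * n \<Longrightarrow> dist (\<omega> i) (v i) < d) \<Longrightarrow> opnorm (prod_mat \<omega> (t * n)) < r"
    by (rule opnorm_prod_mat_locally_less) blast
  define C where "C = {\<omega>. \<forall>i<t * n. \<omega> i \<in> ball (v i) d}"
  show ?thesis
  proof (rule that[of C "t * n"])
    show "C \<in> sets (iid \<nu>)"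
      unfolding C_def using assms(2) by (intro sets_iid_cylinder) auto
    show "0 < measure (iid \<nu>) C"
      unfolding C_def using \<open>0 < d\<close> assms(1-3)
      by (intro iid_cylinder_positive[where v=v]) (auto simp: v_def)
    show "a \<in> C \<longleftrightarrow> b \<in> C" if "\<And>i. i < t * n \<Longrightarrow> a i = b i" for a b
      using that by (auto simp: C_def)
    show "opnorm (prod_mat \<omega> (t * n)) < r" if "\<omega> \<in> C" for \<omega>
      using that by (intro close) (auto simp: C_def dist_commute)
  qed
qed

lemma iid_bounded_products_level:
  assumes "prob_space \<nu>" "sets \<nu> = sets borel" "AE \<omega> in iid \<nu>. bounded (range (\<lambda>n. prod_mat \<omega> n))"
  obtains K where "0 \<le> K" "0 < measure (iid \<nu>) {\<omega>. \<forall>n. opnorm (prod_mat \<omega> n) \<le> K}"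
proof -
  interpret prob_space "iid \<nu>" using prob_space_iid[OF assms(1)] .
  define G where "G K = {\<omega> \<in> space (iid \<nu>). \<forall>n. opnorm (prod_mat \<omega> n) \<le> real K}" for K :: nat
  have "AE \<omega> in iid \<nu>. \<exists>K. \<omega> \<in> G K"
    using assms(3)
  proof eventually_elim
    case (elim \<omega>)
    then obtain B where "\<And>n. opnorm (prod_mat \<omega> n) \<le> B"
      by (rule bounded_imp_opnorm_bounded) blast
    then have "\<omega> \<in> G (nat \<lceil>B\<rceil>)"
      unfolding G_def space_iid[OF assms(2)] using real_nat_ceiling_ge[of B] by (auto intro: order_trans)
    then show ?case ..
  qed
  moreover have "G K \<in> events" for K
    unfolding G_def using measurable_prod_mat_iid[OF assms(2)] by measurable
  ultimately obtain K where "0 < prob (G K)"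
    by (rule AE_ex_imp_prob_positive)
  then show ?thesis
    using that[of "real K"] by (simp add: G_def space_iid[OF assms(2)])
qed

lemma iid_halving_event:
  fixes w :: "nat \<Rightarrow> 'm::finite cmat"
  assumes "prob_space \<nu>" "sets \<nu> = sets borel" "\<And>k. w k \<in> mat_support \<nu>"
    and "opnorm (prod_mat w n) < 1" and "AE \<omega> in iid \<nu>. bounded (range (\<lambda>n. prod_mat \<omega> n))"
  obtains H L where "H \<in> sets (iid \<nu>)" "0 < measure (iid \<nu>) H"
    "\<forall>\<omega>\<in>H. \<forall>t. opnorm (prod_mat (seq_shift L \<omega>) t ** prod_mat \<omega> L) \<le> 1 / 2"
proof -
  obtain K where "0 \<le> K" and G_pos: "0 < measure (iid \<nu>) {\<omega>. \<forall>n. opnorm (prod_mat \<omega> n) \<le> K}"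
    by (rule iid_bounded_products_level[OF assms(1,2,5)])
  define G where "G = {\<omega> \<in> space (iid \<nu>). \<forall>n. opnorm (prod_mat \<omega> n) \<le> K}"
  have G: "G \<in> sets (iid \<nu>)"
    unfolding G_def using measurable_prod_mat_iid[OF assms(2)] by measurable
  define r where "r = 1 / (2 * (K + 1))"
  have "0 < r" "K * r \<le> 1 / 2"
    unfolding r_def using \<open>0 \<le> K\<close> by (simp_all add: field_simps)
  obtain C L where C: "C \<in> sets (iid \<nu>)" "0 < measure (iid \<nu>) C"
    "\<And>a b. (\<And>i. i < L \<Longrightarrow> a i = b i) \<Longrightarrow> a \<in> C \<longleftrightarrow> b \<in> C"
    and contracting: "\<And>\<omega>. \<omega> \<in> C \<Longrightarrow> opnorm (prod_mat \<omega> L) < r"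
  proof (rule iid_contracting_cylinder[OF assms(1-4) \<open>0 < r\<close>])
    fix C L assume "C \<in> sets (iid \<nu>)" "0 < measure (iid \<nu>) C"
      "\<And>a b. (\<And>i. i < L \<Longrightarrow> a i = b i) \<Longrightarrow> a \<in> C \<longleftrightarrow> b \<in> C"
      "\<And>\<omega>. \<omega> \<in> C \<Longrightarrow> opnorm (prod_mat \<omega> L) < r"
    then show thesis by (rule that)
  qed
  show ?thesis
  proof (rule that[of "{\<omega> \<in> C. seq_shift L \<omega> \<in> G}" L])
    show "{\<omega> \<in> C. seq_shift L \<omega> \<in> G} \<in> sets (iid \<nu>)"
      using C(1) G by measurable
    show "0 < measure (iid \<nu>) {\<omega> \<in> C. seq_shift L \<omega> \<in> G}"
      using iid_measure_prefix_shift[where k=L, OF assms(1) C(1,3) G] G_pos C(2)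
      by (simp add: G_def space_iid[OF assms(2)])
    have "opnorm (prod_mat (seq_shift L \<omega>) t ** prod_mat \<omega> L) \<le> 1 / 2"
      if "\<omega> \<in> C" "seq_shift L \<omega> \<in> G" for \<omega> t
    proof -
      have "opnorm (prod_mat (seq_shift L \<omega>) t ** prod_mat \<omega> L) \<le> K * r"
        using that \<open>0 \<le> K\<close> contracting[of \<omega>] unfolding G_def
        by (intro order_trans[OF opnorm_matrix_mul_le] mult_mono) (auto simp: opnorm_nonneg)
      with \<open>K * r \<le> 1 / 2\<close> show ?thesis by linarith
    qed
    then show "\<forall>\<omega>\<in>{\<omega> \<in> C. seq_shift L \<omega> \<in> G}.
        \<forall>t. opnorm (prod_mat (seq_shift L \<omega>) t ** prod_mat \<omega> L) \<le> 1 / 2"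
      by blast
  qed
qed

theorem mainTheorem9:
  fixes \<nu> :: "('m::finite) cmat measure"
  assumes "prob_space \<nu>"
    and "sets \<nu> = sets borel"
    and "compact (mat_support \<nu>)"
    and "semi_neutral \<nu>"
    and "AE w in iid \<nu>. bounded (range (\<lambda>n. prod_mat w n))"
    and "A \<in> S_set \<nu>"
  shows "opnorm A \<ge> 1"
proof (rule ccontr)
  obtain w n where A: "A = prod_mat w n" and w: "\<And>k. w k \<in> mat_support \<nu>"
    using assms(6) unfolding S_set_def by blast
  assume "\<not> opnorm A \<ge> 1"
  with A have "opnorm (prod_mat w n) < 1"
    by simp
  then obtain H L where H: "H \<in> sets (iid \<nu>)" "0 < measure (iid \<nu>) H"
    and halving: "\<forall>\<omega>\<in>H. \<forall>t. opnorm (prod_mat (seq_shift L \<omega>) t ** prod_mat \<omega> L) \<le> 1 / 2"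
    by (rule iid_halving_event[OF assms(1,2) w _ assms(5)])
  from iid_frequent_visits_positive[OF assms(1,2) H] obtain \<omega> where
    frequent: "\<exists>\<^sub>F N in sequentially. measure (iid \<nu>) H * N / 2 \<le> card {j. j < N \<and> seq_shift j \<omega> \<in> H}"
    and positive: "\<forall>n. 0 < opnorm (prod_mat \<omega> n)"
    and lyapunov: "(\<lambda>n. ln (opnorm (prod_mat \<omega> n)) / n) \<longlonglongrightarrow> 0"
    and bounded: "bounded (range (\<lambda>n. prod_mat \<omega> n))"
    using ex_in_positive_measure_AE[OF AE_conjI[OF assms(5) conjunct1[OF assms(4)[unfolded semi_neutral_def]]]]
    by blast
  have "opnorm (prod_mat \<omega> N) \<le> opnorm (prod_mat \<omega> j) / 2" if "seq_shift j \<omega> \<in> H" "j + L \<le> N" for j N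
    using halving that(1) by (intro opnorm_prod_mat_halves[OF _ that(2)]) blast
  moreover from bounded obtain B where "\<And>N. opnorm (prod_mat \<omega> N) \<le> B"
    by (rule bounded_imp_opnorm_bounded) blast
  ultimately have "\<not> (\<lambda>N. ln (opnorm (prod_mat \<omega> N)) / N) \<longlonglongrightarrow> 0"
    using frequent positive H(2) by (intro frequent_halving_not_subexponential) auto
  with lyapunov show False
    by simp
qed

end
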